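(* Let $k\ge1$ and $d\ge 1$ be integers and $c$ a real number with $0< c\le k$. Let $S$ be a binomial random variable with parameters $k$ and $c/k$. If $d\le c\left(1-\frac{1}{k+1}\right)+1$, then \[ \mathbb{P}(S\ge d)\ \ge\ h_d(c) = 1-e^{-c}\sum_{i=0}^{d-1}\frac{c^i}{i!}. \]
   Context: $\mathbb{P}(S\ge d)$ is the probability that a buyer whose values for $k$ items are i.i.d. on $\{0,1\}$ with $\mathbb{P}(1)=c/k$ buys the bundle of all items at posted price $d$. *)

theory Defs
  imports "HOL-Probability.Probability"
begin

text \<open>h_d(c) = 1 - e^{-c} sum_{i=0}^{d-1} c^i / i!  (Poisson(c) tail P(Po(c) >= d)).\<close>
definition h :: "nat \<Rightarrow> real \<Rightarrow> real" where
  "h d c = 1 - exp (- c) * (\<Sum>i<d. c ^ i / fact i)"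

end

theory Submission
  imports Defs "HOL-Analysis.Weierstrass_Theorems"
begin

(* For fixed j, F n p = P(Bin(n, p) \<le> j) satisfies F n (\<lambda>/n) \<le> F (n+1) (\<lambda>/(n+1)) whenever
   j \<le> \<lambda> n/(n+1), and F n (\<lambda>/n) tends to the Poisson(\<lambda>) cdf; monotonicity in n then gives the
   bound. To compare n with n+1, interpolate by \<Phi> p = F n p - (\<lambda> - n p) b n j p, with b the
   binomial probabilities: \<Phi> (\<lambda>/n) = F n (\<lambda>/n), \<Phi> (\<lambda>/(n+1)) = F (n+1) (\<lambda>/(n+1)), and
   \<Phi>' p = n (b (n-1) (j-1) p - b (n-1) j p) ((n+1) p - \<lambda>), which is \<le> 0 between the two points
   because there j-1 lies below the mode of Bin(n-1, p). *)

lemma has_real_derivative_Bernstein_0: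
  "((\<lambda>p. Bernstein (Suc m) 0 p) has_real_derivative - real (Suc m) * Bernstein m 0 p) (at p)"
proof -
  have "((\<lambda>p. (1 - p) ^ Suc m) has_real_derivative real (Suc m) * (1 - p) ^ m * (- 1)) (at p)"
    by (rule derivative_eq_intros refl)+ simp
  then show ?thesis by (simp add: Bernstein_def algebra_simps)
qed

lemma has_real_derivative_Bernstein_Suc:
  "((\<lambda>p. Bernstein (Suc m) (Suc i) p) has_real_derivative
     real (Suc m) * (Bernstein m i p - Bernstein m (Suc i) p)) (at p)"
proof -
  have up: "real (Suc i) * real (Suc m choose Suc i) = real (Suc m) * real (m choose i)"
    using Suc_times_binomial[of i m] by (metis of_nat_mult)
  have down: "real (m - i) * real (Suc m choose Suc i) = real (Suc m) * real (m choose Suc i)"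
    using binomial_absorb_comp[of "Suc m" "Suc i"] by (metis diff_Suc_Suc diff_Suc_1 of_nat_mult)
  have "((\<lambda>p. p ^ Suc i * (1 - p) ^ (m - i)) has_real_derivative
      real (Suc i) * p ^ i * (1 - p) ^ (m - i) - real (m - i) * p ^ Suc i * (1 - p) ^ (m - Suc i)) (at p)"
  proof -
    have "((\<lambda>p. 1 - p) has_real_derivative - 1) (at p)"
      by (auto intro!: derivative_eq_intros)
    from DERIV_mult[OF DERIV_pow[of "Suc i"] DERIV_power[OF this, of "m - i"]]
    show ?thesis by (simp add: algebra_simps)
  qed
  then have "((\<lambda>p. real (Suc m choose Suc i) * (p ^ Suc i * (1 - p) ^ (m - i))) has_real_derivative
      real (Suc m choose Suc i) * (real (Suc i) * p ^ i * (1 - p) ^ (m - i)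
        - real (m - i) * p ^ Suc i * (1 - p) ^ (m - Suc i))) (at p)"
    by (rule DERIV_cmult)
  also have "real (Suc m choose Suc i) * (real (Suc i) * p ^ i * (1 - p) ^ (m - i)
        - real (m - i) * p ^ Suc i * (1 - p) ^ (m - Suc i))
      = real (Suc i) * real (Suc m choose Suc i) * p ^ i * (1 - p) ^ (m - i)
        - real (m - i) * real (Suc m choose Suc i) * p ^ Suc i * (1 - p) ^ (m - Suc i)"
    by (simp add: algebra_simps)
  also have "\<dots> = real (Suc m) * (Bernstein m i p - Bernstein m (Suc i) p)"
    unfolding up down by (simp add: Bernstein_def algebra_simps)
  finally show ?thesis by (simp add: Bernstein_def mult.assoc)
qed

lemma Bernstein_Suc_Suc:
  "Bernstein (Suc m) (Suc i) p = p * Bernstein m i p + (1 - p) * Bernstein m (Suc i) p"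
proof (cases "i < m")
  case True
  then have "m - i = Suc (m - Suc i)" by simp
  then show ?thesis by (simp add: Bernstein_def algebra_simps)
qed (auto simp: Bernstein_def binomial_eq_0)

lemma Bernstein_le_Bernstein_Suc:
  assumes "0 < p" "p < 1" "real (Suc i) \<le> real (Suc m) * p"
  shows "Bernstein m i p \<le> Bernstein m (Suc i) p"
proof -
  have "real (Suc m) * p < real (Suc m)" using assms(2) by simp
  then have "real (Suc i) < real (Suc m)" using assms(3) by linarith
  then obtain r where m: "m = Suc (i + r)"
    by (auto simp: less_iff_Suc_add)
  then have r: "m - i = Suc r" "m - Suc i = r" by auto
  have ratio: "real (Suc i) * real (m choose Suc i) = real (Suc r) * real (m choose i)"
    using binomial_absorption[of i m] binomial_absorb_comp[of m i] r(1) by (metis of_nat_mult)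
  have "real (Suc i) * (Bernstein m (Suc i) p - Bernstein m i p)
      = real (Suc i) * real (m choose Suc i) * p ^ Suc i * (1 - p) ^ r
        - real (Suc i) * real (m choose i) * p ^ i * (1 - p) ^ Suc r"
    by (simp add: Bernstein_def r algebra_simps)
  also have "\<dots> = real (m choose i) * p ^ i * (1 - p) ^ r * (real (Suc r) * p - real (Suc i) * (1 - p))"
    unfolding ratio by (simp add: algebra_simps)
  also have "real (Suc r) * p - real (Suc i) * (1 - p) = real (Suc m) * p - real (Suc i)"
    using m by (simp add: algebra_simps)
  also have "real (m choose i) * p ^ i * (1 - p) ^ r * \<dots> \<ge> 0"
    using assms by simp
  finally show ?thesis by (simp add: zero_le_mult_iff)
qed

(* Through Bernstein polynomials rather than binomial_pmf, so that it is a polynomial in p on all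
   of the reals and can be differentiated. *)
definition binomial_cdf :: "nat \<Rightarrow> nat \<Rightarrow> real \<Rightarrow> real" where
  "binomial_cdf n j p = (\<Sum>l\<le>j. Bernstein n l p)"

lemma has_real_derivative_binomial_cdf:
  "((\<lambda>p. binomial_cdf (Suc m) j p) has_real_derivative - real (Suc m) * Bernstein m j p) (at p)"
proof (induction j)
  case 0
  show ?case unfolding binomial_cdf_def using has_real_derivative_Bernstein_0 by simp
next
  case (Suc j)
  have "((\<lambda>p. binomial_cdf (Suc m) j p + Bernstein (Suc m) (Suc j) p) has_real_derivative
      - real (Suc m) * Bernstein m j p + real (Suc m) * (Bernstein m j p - Bernstein m (Suc j) p)) (at p)"
    by (intro DERIV_add Suc has_real_derivative_Bernstein_Suc)
  then show ?case by (simp add: binomial_cdf_def algebra_simps)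
qed

lemma binomial_cdf_Suc:
  "binomial_cdf (Suc n) j p = binomial_cdf n j p - p * Bernstein n j p"
proof (induction j)
  case 0
  then show ?case by (simp add: binomial_cdf_def Bernstein_def algebra_simps)
next
  case (Suc j)
  then show ?case by (simp add: binomial_cdf_def Bernstein_Suc_Suc algebra_simps)
qed

lemma has_real_derivative_binomial_cdf_interpolant:
  "((\<lambda>p. binomial_cdf (Suc m) (Suc i) p - (lam - real (Suc m) * p) * Bernstein (Suc m) (Suc i) p)
     has_real_derivative
     real (Suc m) * (Bernstein m i p - Bernstein m (Suc i) p) * ((real (Suc m) + 1) * p - lam)) (at p)"
proof -
  have "((\<lambda>p. binomial_cdf (Suc m) (Suc i) p - (lam - real (Suc m) * p) * Bernstein (Suc m) (Suc i) p)
     has_real_derivative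
     - real (Suc m) * Bernstein m (Suc i) p - (- real (Suc m) * Bernstein (Suc m) (Suc i) p
        + real (Suc m) * (Bernstein m i p - Bernstein m (Suc i) p) * (lam - real (Suc m) * p))) (at p)"
    by (auto intro!: derivative_eq_intros has_real_derivative_binomial_cdf
        has_real_derivative_Bernstein_Suc)
  then show ?thesis by (simp add: Bernstein_Suc_Suc algebra_simps)
qed

lemma binomial_cdf_le_Suc:
  assumes lam: "0 < lam" "lam \<le> real n" and j: "1 \<le> j" "real j \<le> lam * real n / (real n + 1)"
  shows "binomial_cdf n j (lam / real n) \<le> binomial_cdf (Suc n) j (lam / real (Suc n))"
proof -
  obtain m where n: "n = Suc m" using lam by (cases n) auto
  obtain i where i: "j = Suc i" using j by (cases j) auto
  define \<Phi> where "\<Phi> p = binomial_cdf n j p - (lam - real n * p) * Bernstein n j p" for p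
  define \<Phi>' where "\<Phi>' p = real n * (Bernstein m i p - Bernstein m j p) * ((real n + 1) * p - lam)" for p
  have deriv: "(\<Phi> has_real_derivative \<Phi>' p) (at p)" for p
    unfolding \<Phi>_def[abs_def] \<Phi>'_def n i by (rule has_real_derivative_binomial_cdf_interpolant)
  define a where "a = lam / real (Suc n)"
  define b where "b = lam / real n"
  have n_pos: "real n > 0" using lam by simp
  have a_pos: "0 < a" unfolding a_def using lam by simp
  have b_le_1: "b \<le> 1" unfolding b_def using lam by simp
  have "\<Phi> b \<le> \<Phi> a"
  proof (rule DERIV_nonpos_imp_decreasing_open[of a b \<Phi>])
    show "a \<le> b" unfolding a_def b_def using lam n_pos by (simp add: frac_le)
    show "continuous_on {a..b} \<Phi>"
      using deriv by (meson DERIV_continuous_on has_field_derivative_at_within)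
  next
    fix x assume x: "a < x" "x < b"
    have lam_le: "lam \<le> (real n + 1) * x"
      using x(1) unfolding a_def by (simp add: field_simps)
    have "real j \<le> lam * real n / (real n + 1)" by (fact j(2))
    also have "\<dots> \<le> (real n + 1) * x * real n / (real n + 1)"
      using lam_le by (intro divide_right_mono mult_right_mono) auto
    also have "\<dots> = real n * x" by simp
    finally have "real (Suc i) \<le> real (Suc m) * x" unfolding n i .
    moreover have "0 < x" "x < 1"
      using x a_pos b_le_1 by linarith+
    ultimately have "Bernstein m i x \<le> Bernstein m j x"
      unfolding i by (intro Bernstein_le_Bernstein_Suc)
    then have "real n * (Bernstein m i x - Bernstein m j x) \<le> 0"
      using n_pos by (simp add: mult_nonneg_nonpos)
    then have "\<Phi>' x \<le> 0"
      unfolding \<Phi>'_def using lam_le by (simp add: mult_nonpos_nonneg)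
    then show "\<exists>y. (\<Phi> has_real_derivative y) (at x) \<and> y \<le> 0" using deriv by blast
  qed
  moreover have "\<Phi> b = binomial_cdf n j (lam / real n)"
    unfolding \<Phi>_def b_def using n_pos by simp
  moreover have "\<Phi> a = binomial_cdf (Suc n) j (lam / real (Suc n))"
  proof -
    have "lam - real n * a = a" unfolding a_def by (simp add: field_simps)
    then show ?thesis unfolding \<Phi>_def binomial_cdf_Suc a_def by simp
  qed
  ultimately show ?thesis by simp
qed

lemma binomial_div_power_tendsto:
  "(\<lambda>n. real (n choose l) / real n ^ l) \<longlonglongrightarrow> 1 / fact l"
proof -
  have "(\<lambda>n. (\<Prod>t<l. 1 - real t / real n) / fact l) \<longlonglongrightarrow> (\<Prod>t<l. 1 - 0) / fact l"
    by (intro tendsto_intros) auto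
  moreover have "(\<Prod>t<l. 1 - real t / real n) / fact l = real (n choose l) / real n ^ l"
    if "n > 0" for n
  proof -
    have "(\<Prod>t<l. 1 - real t / real n) = (\<Prod>t<l. (real n - real t) / real n)"
      using that by (intro prod.cong) (auto simp: field_simps)
    also have "\<dots> = (\<Prod>t<l. real n - real t) / real n ^ l"
      by (simp add: prod_dividef)
    also have "(\<Prod>t<l. real n - real t) = fact l * real (n choose l)"
      using gbinomial_mult_fact[of l "real n"] by (simp add: binomial_gbinomial atLeast0LessThan)
    finally show ?thesis by simp
  qed
  then have "eventually (\<lambda>n. (\<Prod>t<l. 1 - real t / real n) / fact l = real (n choose l) / real n ^ l)
      sequentially"
    by (intro eventually_sequentiallyI[of 1]) auto
  ultimately show ?thesis by (simp add: Lim_transform_eventually)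
qed

lemma Bernstein_tendsto_Poisson:
  "(\<lambda>n. Bernstein n l (c / real n)) \<longlonglongrightarrow> c ^ l * exp (- c) / fact l"
proof -
  have "(\<lambda>n. real (n choose l) / real n ^ l * c ^ l * (1 + (- c) / real n) ^ n / (1 - c / real n) ^ l)
      \<longlonglongrightarrow> 1 / fact l * c ^ l * exp (- c) / (1 - 0) ^ l"
    by (intro tendsto_intros binomial_div_power_tendsto tendsto_exp_limit_sequentially) auto
  moreover obtain N :: nat where N: "real N > \<bar>c\<bar>"
    using reals_Archimedean2 by blast
  have "real (n choose l) / real n ^ l * c ^ l * (1 + (- c) / real n) ^ n / (1 - c / real n) ^ l
      = Bernstein n l (c / real n)" if n: "n \<ge> max l (Suc N)" for n
  proof -
    have "real n > \<bar>c\<bar>" using n N by linarith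
    then have "1 - c / real n \<noteq> 0" by (auto simp: field_simps)
    then have "(1 - c / real n) ^ (n - l) = (1 - c / real n) ^ n / (1 - c / real n) ^ l"
      using n by (intro power_diff) auto
    then show ?thesis by (simp add: Bernstein_def power_divide)
  qed
  then have "eventually (\<lambda>n. real (n choose l) / real n ^ l * c ^ l * (1 + (- c) / real n) ^ n
      / (1 - c / real n) ^ l = Bernstein n l (c / real n)) sequentially"
    by (intro eventually_sequentiallyI) blast
  ultimately show ?thesis by (simp add: Lim_transform_eventually)
qed

lemma binomial_cdf_tendsto_Poisson_cdf:
  "(\<lambda>n. binomial_cdf n j (c / real n)) \<longlonglongrightarrow> exp (- c) * (\<Sum>l\<le>j. c ^ l / fact l)"
proof -
  have "(\<lambda>n. binomial_cdf n j (c / real n)) \<longlonglongrightarrow> (\<Sum>l\<le>j. c ^ l * exp (- c) / fact l)"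
    unfolding binomial_cdf_def by (intro tendsto_sum Bernstein_tendsto_Poisson)
  then show ?thesis by (simp add: sum_distrib_left field_simps)
qed

lemma binomial_cdf_le_Poisson_cdf:
  assumes "0 < c" "c \<le> real k" "real j \<le> c * (1 - 1 / (real k + 1))"
  shows "binomial_cdf k j (c / real k) \<le> exp (- c) * (\<Sum>l\<le>j. c ^ l / fact l)"
proof (cases "j = 0")
  case True
  have k_pos: "real k > 0" using assms by linarith
  have "binomial_cdf k 0 (c / real k) = (1 - c / real k) ^ k"
    by (simp add: binomial_cdf_def Bernstein_def)
  also have "\<dots> \<le> exp (- c / real k) ^ k"
  proof (rule power_mono)
    show "1 - c / real k \<le> exp (- c / real k)"
      using exp_ge_add_one_self[of "- c / real k"] by simp
    show "0 \<le> 1 - c / real k" using assms k_pos by simp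
  qed
  also have "\<dots> = exp (- c)"
    using k_pos by (simp flip: exp_of_nat_mult)
  finally show ?thesis using True by simp
next
  case False
  define G where "G t = binomial_cdf (t + k) j (c / real (t + k))" for t
  have "incseq G"
  proof (rule incseq_SucI)
    fix t
    define n where "n = t + k"
    have "1 / (real n + 1) \<le> 1 / (real k + 1)"
      unfolding n_def by (intro divide_left_mono) auto
    then have "c * (1 - 1 / (real k + 1)) \<le> c * (1 - 1 / (real n + 1))"
      using assms by (intro mult_left_mono) auto
    also have "\<dots> = c * real n / (real n + 1)" by (simp add: field_simps)
    finally have "binomial_cdf n j (c / real n) \<le> binomial_cdf (Suc n) j (c / real (Suc n))"
      using assms False unfolding n_def by (intro binomial_cdf_le_Suc) auto
    then show "G t \<le> G (Suc t)" unfolding G_def n_def by simp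
  qed
  moreover have "G \<longlonglongrightarrow> exp (- c) * (\<Sum>l\<le>j. c ^ l / fact l)"
    unfolding G_def by (rule LIMSEQ_ignore_initial_segment[OF binomial_cdf_tendsto_Poisson_cdf])
  ultimately have "G 0 \<le> exp (- c) * (\<Sum>l\<le>j. c ^ l / fact l)" by (rule incseq_le)
  then show ?thesis unfolding G_def by simp
qed

lemma prob_binomial_pmf_atMost:
  assumes "0 \<le> p" "p \<le> 1"
  shows "measure_pmf.prob (binomial_pmf n p) {..j} = binomial_cdf n j p"
  using assms by (simp add: binomial_cdf_def Bernstein_def measure_measure_pmf_finite)

theorem corollary1:
  fixes k d :: nat and c :: real
  assumes "k \<ge> 1" and "d \<ge> 1" and "0 < c" and "c \<le> real k"
    and "real d \<le> c * (1 - 1 / (real k + 1)) + 1"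
  shows "measure_pmf.prob (binomial_pmf k (c / real k)) {d..} \<ge> h d c"
proof -
  obtain j where d: "d = Suc j" using assms(2) by (cases d) auto
  let ?B = "binomial_pmf k (c / real k)"
  have p: "0 \<le> c / real k" "c / real k \<le> 1" using assms by auto
  have "{d..} = space (measure_pmf ?B) - {..j}" using d by auto
  then have "measure_pmf.prob ?B {d..} = 1 - binomial_cdf k j (c / real k)"
    using measure_pmf.prob_compl[of "{..j}" ?B] p by (simp add: prob_binomial_pmf_atMost)
  moreover have "h d c = 1 - exp (- c) * (\<Sum>l\<le>j. c ^ l / fact l)"
    unfolding h_def d lessThan_Suc_atMost ..
  moreover have "binomial_cdf k j (c / real k) \<le> exp (- c) * (\<Sum>l\<le>j. c ^ l / fact l)"
    using assms d by (intro binomial_cdf_le_Poisson_cdf) auto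
  ultimately show ?thesis by simp
qed

end
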